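(* Let $q \in (0,1)$ and $p = 1-q$. For any $x \in \{0,1\}^n$, any $l \ge 1$, any $w \in \{0,1\}^l$, and any $z_0,\dots,z_{l-1} \in \mathbb{C}$, if $U$ denotes a random trace of $x$ with deletion probability $q$, then $$\mathbb{E}_x\left[p^{-1} \sum_{j_0 < \dots < j_{l-1}} \left(\prod_{i=0}^{l-1} 1_{U_{j_i} = w_i}\right)\left(\frac{z_0-q}{p}\right)^{j_0}\left(\prod_{i=1}^{l-1} \left(\frac{z_i-q}{p}\right)^{j_i-j_{i-1}-1}\right)\right] = \sum_{k_0 < \dots < k_{l-1}} \left(\prod_{i=0}^{l-1} 1_{x_{k_i}=w_i}\right) z_0^{k_0}\left(\prod_{i=1}^{l-1} z_i^{k_i-k_{i-1}-1}\right),$$ where the sums run over strictly increasing tuples of indices in $\{0,\dots,n-1\}$.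
   Context: A trace of $x \in \{0,1\}^n$ is obtained by deleting each bit of $x$ independently with probability $q$ and concatenating the remaining bits in order. Strings are indexed starting at $0$. For a trace $U$ and an index $j$ not less than the length of $U$, $U_j$ is defined to be $2$, so that the events $U_j = 0$ and $U_j = 1$ are both false. $\mathbb{E}_x$ denotes expectation over the random trace $U$ of $x$. The convention $0^0 = 1$ is used. *)

theory Defs
  imports "HOL-Probability.Probability"
begin

text \<open>Bits are represented as natural numbers in {0,1}.\<close>

definition trace_pmf :: "real \<Rightarrow> nat list \<Rightarrow> nat list pmf" where
  "trace_pmf q x =
     map_pmf (\<lambda>keep. nths x {i. keep i})
       (Pi_pmf {..<length x} False (\<lambda>_. bernoulli_pmf (1 - q)))"

definition sym_at :: "nat list \<Rightarrow> nat \<Rightarrow> nat" where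
  "sym_at U j = (if j < length U then U ! j else 2)"

definition inc_tuples :: "nat \<Rightarrow> nat \<Rightarrow> nat list set" where
  "inc_tuples n l = {js. length js = l \<and> sorted_wrt (<) js \<and> (\<forall>j\<in>set js. j < n)}"

end

theory Submission
  imports Defs
begin

text \<open>Both sides are values of the weighted subsequence generating function
  \<open>G(U, w, y) = \<Sum>\<^sub>j [U_j = w] y_0^j_0 \<Prod>\<^sub>i y_i^(j_i - j_(i-1) - 1)\<close> (\<open>subseq_gf\<close> below), in
  which every letter of \<open>U\<close> skipped before the \<open>i\<close>-th match carries weight \<open>y_i\<close>. Splitting
  off the first letter gives \<open>G(aU, cw, y) = [a = c] G(U, w, y \<circ> Suc) + y_0 G(U, cw, y)\<close>.
  The first letter of \<open>x\<close> survives in the trace with probability \<open>p = 1 - q\<close>, so induction on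
  \<open>x\<close> gives \<open>E G(U, w, y) = p^|w| G(x, w, p y + q)\<close>: a matched letter must survive,
  contributing \<open>p\<close>, while a skipped letter contributes \<open>y_i\<close> if it survives and \<open>1\<close> if it is
  deleted, i.e. \<open>p y_i + q\<close> on average. Substituting \<open>y = (z - q) / p\<close> gives the theorem.\<close>

text \<open>In \<open>gap_monomial y s js\<close>, \<open>s\<close> is the first position not yet accounted for, so the
  exponent \<open>j - s\<close> of \<open>y 0\<close> is the number of positions skipped before the index \<open>j\<close>.\<close>

fun gap_monomial :: "(nat \<Rightarrow> 'a::comm_monoid_mult) \<Rightarrow> nat \<Rightarrow> nat list \<Rightarrow> 'a" where
  "gap_monomial y s [] = 1"
| "gap_monomial y s (j # js) = y 0 ^ (j - s) * gap_monomial (\<lambda>i. y (Suc i)) (Suc j) js"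

lemma gap_monomial_Cons_eq_prod:
  "gap_monomial y s (j # js) =
     y 0 ^ (j - s) * (\<Prod>i\<in>{1..<Suc (length js)}. y i ^ ((j # js) ! i - (j # js) ! (i - 1) - 1))"
proof (induction js arbitrary: j s y)
  case Nil
  then show ?case by simp
next
  case (Cons k js)
  have "(\<Prod>i\<in>{1..<Suc (Suc (length js))}. y i ^ ((j # k # js) ! i - (j # k # js) ! (i - 1) - 1))
      = y 1 ^ (k - j - 1) *
        (\<Prod>i\<in>{1..<Suc (length js)}. y (Suc i) ^ ((k # js) ! i - (k # js) ! (i - 1) - 1))"
    by (subst prod.atLeast_Suc_lessThan) (simp_all only: prod.shift_bounds_Suc_ivl, auto intro!: prod.cong)
  then show ?case
    using Cons.IH[of "\<lambda>i. y (Suc i)" "Suc j" k] by simp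
qed

lemma gap_monomial_eq_powers:
  assumes "length js = l" "1 \<le> l"
  shows "y 0 ^ (js ! 0) * (\<Prod>i\<in>{1..<l}. y i ^ (js ! i - js ! (i - 1) - 1)) = gap_monomial y 0 js"
proof -
  obtain j js' where "js = j # js'" "l = Suc (length js')"
    using assms by (cases js) auto
  then show ?thesis
    using gap_monomial_Cons_eq_prod[of y 0 j js'] by (simp del: gap_monomial.simps)
qed

lemma gap_monomial_map_Suc_shift: "gap_monomial y (Suc s) (map Suc js) = gap_monomial y s js"
  by (induction js arbitrary: y s) auto

lemma gap_monomial_map_Suc:
  "js \<noteq> [] \<Longrightarrow> gap_monomial y 0 (map Suc js) = y 0 * gap_monomial y 0 js"
  by (cases js) (simp_all add: gap_monomial_map_Suc_shift mult.assoc)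

lemma finite_inc_tuples [simp]: "finite (inc_tuples n l)"
proof (rule finite_subset)
  show "inc_tuples n l \<subseteq> {js. set js \<subseteq> {..<n} \<and> length js = l}"
    by (auto simp: inc_tuples_def)
qed (rule finite_lists_length_eq, simp)

lemma inc_tuples_0_right [simp]: "inc_tuples n 0 = {[]}"
  by (auto simp: inc_tuples_def)

lemma inc_tuples_0_Suc [simp]: "inc_tuples 0 (Suc l) = {}"
  by (auto simp: inc_tuples_def)

lemma inc_tuples_mono: "n \<le> m \<Longrightarrow> inc_tuples n l \<subseteq> inc_tuples m l"
  by (auto simp: inc_tuples_def)

lemma map_Suc_in_inc_tuples_iff [simp]:
  "map Suc js \<in> inc_tuples (Suc n) l \<longleftrightarrow> js \<in> inc_tuples n l"
  by (auto simp: inc_tuples_def sorted_wrt_map)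

lemma Cons_0_map_Suc_in_inc_tuples_iff [simp]:
  "0 # map Suc js \<in> inc_tuples (Suc n) (Suc l) \<longleftrightarrow> js \<in> inc_tuples n l"
  by (auto simp: inc_tuples_def sorted_wrt_map)

lemma map_Suc_pred: "0 \<notin> set js \<Longrightarrow> map Suc (map (\<lambda>k. k - 1) js) = js"
  by (induction js) auto

lemma inc_tuples_Suc:
  "inc_tuples (Suc n) (Suc l) =
     (\<lambda>js. 0 # map Suc js) ` inc_tuples n l \<union> map Suc ` inc_tuples n (Suc l)"
proof (intro equalityI subsetI)
  fix js assume js: "js \<in> inc_tuples (Suc n) (Suc l)"
  then obtain j js' where js_eq: "js = j # js'"
    by (cases js) (auto simp: inc_tuples_def)
  have "0 \<notin> set js'"
    using js js_eq by (auto simp: inc_tuples_def)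
  show "js \<in> (\<lambda>js. 0 # map Suc js) ` inc_tuples n l \<union> map Suc ` inc_tuples n (Suc l)"
  proof (cases "j = 0")
    case True
    then have "js = 0 # map Suc (map (\<lambda>k. k - 1) js')"
      using js_eq map_Suc_pred[OF \<open>0 \<notin> set js'\<close>] by simp
    then show ?thesis
      using js by (metis Cons_0_map_Suc_in_inc_tuples_iff UnI1 image_eqI)
  next
    case False
    then have "js = map Suc (map (\<lambda>k. k - 1) js)"
      using js_eq map_Suc_pred[of js] \<open>0 \<notin> set js'\<close> by simp
    then show ?thesis
      using js by (metis map_Suc_in_inc_tuples_iff UnI2 image_eqI)
  qed
qed auto

definition subseq_gf :: "'a list \<Rightarrow> 'a list \<Rightarrow> (nat \<Rightarrow> 'b::comm_semiring_1) \<Rightarrow> 'b" where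
  "subseq_gf U w y =
     (\<Sum>js\<in>inc_tuples (length U) (length w).
        (\<Prod>i<length w. if U ! (js ! i) = w ! i then 1 else 0) * gap_monomial y 0 js)"

lemma subseq_gf_Nil_right [simp]: "subseq_gf U [] y = 1"
  by (simp add: subseq_gf_def)

lemma subseq_gf_Nil_Cons [simp]: "subseq_gf [] (c # w) y = 0"
  by (simp add: subseq_gf_def)

lemma subseq_gf_Cons_Cons:
  fixes y :: "nat \<Rightarrow> 'b::comm_semiring_1"
  shows "subseq_gf (a # U) (c # w) y =
     (if a = c then 1 else 0) * subseq_gf U w (\<lambda>i. y (Suc i)) + y 0 * subseq_gf U (c # w) y"
proof -
  define summand where "summand U w y js =
      (\<Prod>i<length w. if U ! (js ! i) = w ! i then 1 else 0) * gap_monomial y 0 js"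
    for U w :: "'a list" and y :: "nat \<Rightarrow> 'b" and js
  have first_kept: "summand (a # U) (c # w) y (0 # map Suc js) =
      (if a = c then 1 else 0) * summand U w (\<lambda>i. y (Suc i)) js"
    if "js \<in> inc_tuples (length U) (length w)" for js
  proof -
    have "length js = length w"
      using that by (simp add: inc_tuples_def)
    then show ?thesis
      by (simp add: summand_def prod.lessThan_Suc_shift gap_monomial_map_Suc_shift
          del: prod.lessThan_Suc)
  qed
  have first_deleted: "summand (a # U) (c # w) y (map Suc js) = y 0 * summand U (c # w) y js"
    if "js \<in> inc_tuples (length U) (Suc (length w))" for js
  proof -
    have len: "length js = length (c # w)"
      using that by (simp add: inc_tuples_def)
    have "(\<Prod>i<length (c # w). if (a # U) ! (map Suc js ! i) = (c # w) ! i then 1 else 0) =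
          (\<Prod>i<length (c # w). if U ! (js ! i) = (c # w) ! i then 1 else (0::'b))"
      by (rule prod.cong) (simp_all add: len)
    moreover have "js \<noteq> []"
      using len by auto
    ultimately show ?thesis
      by (simp add: summand_def gap_monomial_map_Suc ac_simps del: prod.lessThan_Suc)
  qed
  have gf_eq: "subseq_gf U' w' y' =
      (\<Sum>js\<in>inc_tuples (length U') (length w'). summand U' w' y' js)" for U' w' y'
    by (simp add: subseq_gf_def summand_def)
  have "inj_on (\<lambda>js. 0 # map Suc js) A" "inj_on (map Suc) A" for A :: "nat list set"
    by (auto simp: inj_on_def)
  moreover have "(\<lambda>js. 0 # map Suc js) ` A \<inter> map Suc ` B = {}" for A B
    by auto
  ultimately have "subseq_gf (a # U) (c # w) y =
      (\<Sum>js\<in>inc_tuples (length U) (length w). summand (a # U) (c # w) y (0 # map Suc js))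
      + (\<Sum>js\<in>inc_tuples (length U) (Suc (length w)). summand (a # U) (c # w) y (map Suc js))"
    by (simp only: gf_eq length_Cons inc_tuples_Suc sum.union_disjoint finite_imageI
        finite_inc_tuples sum.reindex o_def)
  also have "\<dots> =
      (if a = c then 1 else 0) * subseq_gf U w (\<lambda>i. y (Suc i)) + y 0 * subseq_gf U (c # w) y"
    by (simp add: first_kept first_deleted gf_eq sum_distrib_left)
  finally show ?thesis .
qed

lemma subseq_gf_eq_sum_powers:
  assumes "length U = n" "length w = l" "1 \<le> l"
  shows "subseq_gf U w y =
    (\<Sum>ks\<in>inc_tuples n l. (\<Prod>i<l. if U ! (ks ! i) = w ! i then 1 else 0) *
       y 0 ^ (ks ! 0) * (\<Prod>i\<in>{1..<l}. y i ^ (ks ! i - ks ! (i - 1) - 1)))"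
  unfolding subseq_gf_def assms(1,2)
proof (rule sum.cong)
  fix ks assume "ks \<in> inc_tuples n l"
  then have "length ks = l"
    by (simp add: inc_tuples_def)
  then show "(\<Prod>i<l. if U ! (ks ! i) = w ! i then 1 else 0) * gap_monomial y 0 ks =
      (\<Prod>i<l. if U ! (ks ! i) = w ! i then 1 else 0) *
        y 0 ^ (ks ! 0) * (\<Prod>i\<in>{1..<l}. y i ^ (ks ! i - ks ! (i - 1) - 1))"
    by (subst gap_monomial_eq_powers[OF _ assms(3), symmetric]) (simp_all add: mult.assoc)
qed simp

lemma subseq_gf_eq_sum_sym_at:
  fixes y :: "nat \<Rightarrow> 'b::comm_semiring_1"
  assumes "length U \<le> n" "2 \<notin> set w" "length w = l" "1 \<le> l"
  shows "subseq_gf U w y =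
    (\<Sum>js\<in>inc_tuples n l. (\<Prod>i<l. if sym_at U (js ! i) = w ! i then 1 else 0) *
       y 0 ^ (js ! 0) * (\<Prod>i\<in>{1..<l}. y i ^ (js ! i - js ! (i - 1) - 1)))"
    (is "_ = sum ?f _")
proof -
  have vanish: "?f js = 0" if "js \<in> inc_tuples n l - inc_tuples (length U) l" for js
  proof -
    have "length js = l" "\<not> (\<forall>j\<in>set js. j < length U)"
      using that by (auto simp: inc_tuples_def)
    then obtain i where i: "i < l" "\<not> js ! i < length U"
      by (auto simp: in_set_conv_nth)
    have "w ! i \<in> set w"
      using i assms(3) by simp
    then have "sym_at U (js ! i) \<noteq> w ! i"
      using i assms(2) by (auto simp: sym_at_def)
    then have "(\<Prod>i<l. if sym_at U (js ! i) = w ! i then 1 else 0) = (0::'b)"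
      using i by (intro prod_zero) auto
    then show ?thesis
      by simp
  qed
  have sym_at_nth: "sym_at U (js ! i) = U ! (js ! i)"
    if "js \<in> inc_tuples (length U) l" "i < l" for js i
    using that by (auto simp: inc_tuples_def sym_at_def)
  have "sum ?f (inc_tuples n l) = sum ?f (inc_tuples (length U) l)"
    by (intro sum.mono_neutral_right finite_inc_tuples inc_tuples_mono assms(1) ballI vanish)
  also have "\<dots> = subseq_gf U w y"
    unfolding subseq_gf_eq_sum_powers[OF refl assms(3,4)]
    by (intro sum.cong prod.cong refl arg_cong2[where f = "(*)"]) (simp add: sym_at_nth)
  finally show ?thesis ..
qed

lemma trace_pmf_Nil [simp]: "trace_pmf q [] = return_pmf []"
  by (simp add: trace_pmf_def)

lemma trace_pmf_Cons:
  "trace_pmf q (a # x) =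
     bind_pmf (bernoulli_pmf (1 - q)) (\<lambda>b. map_pmf (\<lambda>U. if b then a # U else U) (trace_pmf q x))"
proof -
  define B where "B = bernoulli_pmf (1 - q)"
  define m where "m = length x"
  \<comment> \<open>\<open>h 0 = m\<close> keeps the point outside the domain outside the range, as \<open>Pi_pmf_bij_betw\<close> requires\<close>
  define h where "h i = (if i = 0 then m else i - 1)" for i
  have bij: "bij_betw h (Suc ` {..<m}) {..<m}"
    unfolding h_def by (rule bij_betw_byWitness[where f' = Suc]) auto
  have Pi_shift: "Pi_pmf (Suc ` {..<m}) False (\<lambda>_. B) =
      map_pmf (\<lambda>g. g \<circ> h) (Pi_pmf {..<m} False (\<lambda>_. B))"
    by (rule Pi_pmf_bij_betw[OF _ bij]) (auto simp: h_def image_iff gr0_conv_Suc)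
  have nths_upd: "nths (a # x) (Collect ((g \<circ> h)(0 := b))) =
      (if b then a # nths x {i. g i} else nths x {i. g i})" for g b
    by (simp add: nths_Cons h_def)
  have "trace_pmf q (a # x) =
      map_pmf (\<lambda>g. nths (a # x) {i. g i})
        (do {b \<leftarrow> B; g \<leftarrow> Pi_pmf (Suc ` {..<m}) False (\<lambda>_. B); return_pmf (g(0 := b))})"
    by (simp add: trace_pmf_def lessThan_Suc_eq_insert_0 Pi_pmf_insert' B_def m_def
        del: lessThan_Suc)
  also have "\<dots> = do {b \<leftarrow> B; g \<leftarrow> Pi_pmf {..<m} False (\<lambda>_. B);
                      return_pmf (nths (a # x) (Collect ((g \<circ> h)(0 := b))))}"
    by (simp add: Pi_shift map_bind_pmf bind_map_pmf)
  also have "\<dots> = bind_pmf B (\<lambda>b. map_pmf (\<lambda>U. if b then a # U else U) (trace_pmf q x))"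
    by (simp add: nths_upd trace_pmf_def B_def m_def map_pmf_def bind_assoc_pmf bind_return_pmf)
  finally show ?thesis
    by (simp add: B_def)
qed

lemma set_pmf_trace_pmf_subset:
  "set_pmf (trace_pmf q x) \<subseteq> {U. set U \<subseteq> set x \<and> length U \<le> length x}"
proof
  fix U assume "U \<in> set_pmf (trace_pmf q x)"
  then obtain I where U: "U = nths x I"
    by (auto simp: trace_pmf_def)
  have "card {i. i < length x \<and> i \<in> I} \<le> card {..<length x}"
    by (rule card_mono) auto
  then show "U \<in> {U. set U \<subseteq> set x \<and> length U \<le> length x}"
    by (simp add: U length_nths set_nths_subset)
qed

lemma finite_set_pmf_trace_pmf [simp]: "finite (set_pmf (trace_pmf q x))"
  using finite_lists_length_le[of "set x" "length x"] set_pmf_trace_pmf_subset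
  by (rule finite_subset[rotated]) simp

lemma expectation_trace_pmf_Cons:
  fixes f :: "nat list \<Rightarrow> 'b::{banach, second_countable_topology}"
  assumes "0 \<le> q" "q \<le> 1"
  shows "measure_pmf.expectation (trace_pmf q (a # x)) f =
    (1 - q) *\<^sub>R measure_pmf.expectation (trace_pmf q x) (\<lambda>U. f (a # U))
    + q *\<^sub>R measure_pmf.expectation (trace_pmf q x) f"
  using assms by (subst trace_pmf_Cons, subst pmf_expectation_bind[of UNIV]) (auto simp: UNIV_bool)

theorem expectation_subseq_gf_trace_pmf:
  fixes y :: "nat \<Rightarrow> 'b::{real_normed_algebra_1, comm_ring_1, banach, second_countable_topology}"
  assumes "0 \<le> q" "q \<le> 1"
  shows "measure_pmf.expectation (trace_pmf q x) (\<lambda>U. subseq_gf U w y) =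
           of_real (1 - q) ^ length w * subseq_gf x w (\<lambda>i. of_real (1 - q) * y i + of_real q)"
proof (induction x arbitrary: w y)
  case Nil
  then show ?case by (cases w) simp_all
next
  case (Cons a x)
  show ?case
  proof (cases w)
    case Nil
    then show ?thesis by simp
  next
    case (Cons c w')
    define p :: 'b where "p = of_real (1 - q)"
    define z where "z = (\<lambda>i. p * y i + of_real q)"
    let ?E = "\<lambda>w y. measure_pmf.expectation (trace_pmf q x) (\<lambda>U. subseq_gf U w y)"
    have IH_tail: "?E w' (\<lambda>i. y (Suc i)) = p ^ length w' * subseq_gf x w' (\<lambda>i. z (Suc i))"
      and IH: "?E w y = p ^ length w * subseq_gf x w z"
      using Cons.IH[of w' "\<lambda>i. y (Suc i)"] Cons.IH[of w y] by (simp_all add: p_def z_def)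
    have "measure_pmf.expectation (trace_pmf q (a # x)) (\<lambda>U. subseq_gf U w y)
        = p * ((if a = c then 1 else 0) * ?E w' (\<lambda>i. y (Suc i)) + y 0 * ?E w y) + of_real q * ?E w y"
      using assms
      by (simp add: expectation_trace_pmf_Cons subseq_gf_Cons_Cons Cons
          integrable_measure_pmf_finite scaleR_conv_of_real p_def)
    also have "\<dots> = p ^ length w * ((if a = c then 1 else 0) * subseq_gf x w' (\<lambda>i. z (Suc i))
                                     + z 0 * subseq_gf x w z)"
      unfolding IH_tail IH by (simp add: z_def Cons algebra_simps)
    also have "\<dots> = p ^ length w * subseq_gf (a # x) w z"
      by (simp add: Cons subseq_gf_Cons_Cons)
    finally show ?thesis
      by (simp add: z_def p_def)
  qed
qed

theorem proposition2:
  fixes q :: real and x w :: "nat list" and n l :: nat and z :: "nat \<Rightarrow> complex"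
  assumes "0 < q" and "q < 1"
    and "length x = n" and "set x \<subseteq> {0, 1}"
    and "1 \<le> l" and "length w = l" and "set w \<subseteq> {0, 1}"
  shows "measure_pmf.expectation (trace_pmf q x)
           (\<lambda>U. (1 / complex_of_real (1 - q)) ^ l *
              (\<Sum>js\<in>inc_tuples n l.
                 (\<Prod>i<l. if sym_at U (js ! i) = w ! i then 1 else 0) *
                 ((z 0 - complex_of_real q) / complex_of_real (1 - q)) ^ (js ! 0) *
                 (\<Prod>i\<in>{1..<l}. ((z i - complex_of_real q) / complex_of_real (1 - q))
                                    ^ (js ! i - js ! (i - 1) - 1))))
         = (\<Sum>ks\<in>inc_tuples n l.
              (\<Prod>i<l. if x ! (ks ! i) = w ! i then 1 else 0) *
              z 0 ^ (ks ! 0) *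
              (\<Prod>i\<in>{1..<l}. z i ^ (ks ! i - ks ! (i - 1) - 1)))"
proof -
  define p where "p = complex_of_real (1 - q)"
  define y where "y = (\<lambda>i. (z i - complex_of_real q) / p)"
  have "p \<noteq> 0"
    using assms(2) by (simp add: p_def)
  then have z_eq: "(\<lambda>i. p * y i + complex_of_real q) = z"
    by (simp add: y_def)
  have w_bits: "2 \<notin> set w"
    using assms(7) by auto
  show ?thesis (is "measure_pmf.expectation _ ?F = ?R")
  proof -
    have "?F U = (1 / p) ^ l * subseq_gf U w y" if "U \<in> set_pmf (trace_pmf q x)" for U
    proof -
      have "length U \<le> n"
        using that set_pmf_trace_pmf_subset assms(3) by blast
      then show ?thesis
        by (simp add: subseq_gf_eq_sum_sym_at[OF _ w_bits assms(6,5)] y_def p_def)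
    qed
    then have "measure_pmf.expectation (trace_pmf q x) ?F
        = measure_pmf.expectation (trace_pmf q x) (\<lambda>U. (1 / p) ^ l * subseq_gf U w y)"
      by (intro integral_cong_AE AE_pmfI) simp_all
    also have "\<dots> = (1 / p) ^ l * (p ^ l * subseq_gf x w (\<lambda>i. p * y i + complex_of_real q))"
      unfolding p_def using expectation_subseq_gf_trace_pmf[of q x w y] assms(1,2,6) by simp
    also have "\<dots> = subseq_gf x w z"
      using \<open>p \<noteq> 0\<close> by (simp add: z_eq power_one_over)
    also have "\<dots> = ?R"
      by (rule subseq_gf_eq_sum_powers[OF assms(3,6,5)])
    finally show ?thesis .
  qed
qed

end
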